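(* Let $m=1$, let $\boldsymbol{S}\in\mathrm{Mat}(M,M,\mathbb{C})$ be invertible, $\boldsymbol{U}\in\mathrm{Mat}(1,M,\mathbb{C})$, $\boldsymbol{V}\in\mathrm{Mat}(M,1,\mathbb{C})$, $\boldsymbol{K}$ a solution of $\boldsymbol{S}\boldsymbol{K}+\boldsymbol{K}\boldsymbol{S}=\boldsymbol{V}\boldsymbol{U}$, $\boldsymbol{\Xi}=e^{-\boldsymbol{S}x-\boldsymbol{S}^{-1}y}$, $p_0\in\mathbb{C}$, and let $q,p$ be the scalar functions $$q=\boldsymbol{U}\boldsymbol{\Xi}\,(\boldsymbol{I}_M+(\boldsymbol{K}\boldsymbol{\Xi})^2)^{-1}\boldsymbol{V},\qquad p=p_0-\boldsymbol{U}\boldsymbol{\Xi}\boldsymbol{K}\boldsymbol{\Xi}\,(\boldsymbol{I}_M+(\boldsymbol{K}\boldsymbol{\Xi})^2)^{-1}\boldsymbol{V}.$$ Then, with $D:=\det(\boldsymbol{I}_M+(\boldsymbol{K}\boldsymbol{\Xi})^2)$, on any open set where $D\neq0$, $$p=p_0+\frac{D_x}{D}\quad(\text{i.e. } p=p_0+(\log D)_x),\qquad q=2\,\mathrm{tr}\big(\boldsymbol{S}\boldsymbol{K}\boldsymbol{\Xi}\,(\boldsymbol{I}_M+(\boldsymbol{K}\boldsymbol{\Xi})^2)^{-1}\big).$$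
   Context: $\boldsymbol{I}_M$ is the $M\times M$ identity matrix; $e^{(\cdot)}$ is the matrix exponential; $x,y$ are real variables and subscripts denote partial derivatives. *)

theory Defs
  imports "HOL-Analysis.Analysis"
begin

primrec mat_pow :: "'a::semiring_1^'n^'n \<Rightarrow> nat \<Rightarrow> 'a^'n^'n" where
  "mat_pow A 0 = mat 1"
| "mat_pow A (Suc k) = A ** mat_pow A k"

definition mat_exp :: "complex^'n^'n \<Rightarrow> complex^'n^'n" where
  "mat_exp A = (\<Sum>k. (inverse (fact k) :: real) *\<^sub>R mat_pow A k)"

end

theory Submission
  imports Defs
begin

(* Write Xi = exp(-x S - y S^-1), A = K Xi, M = 1 + A^2 and B = M^-1.
   Since Xi commutes with S, the Sylvester relation S K + K S = V U gives
     q = U Xi B V = tr(V U Xi B) = tr(S A B) + tr(A S B),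
     p0 - p = U Xi K Xi B V = tr(S A A B) + tr(A S A B),
   and as A commutes with B, cyclicity of the trace yields q = 2 tr(S A B).
   On the other hand dXi/dx = -S Xi, so M' = -(A A S + A S A), and Jacobi's formula
   D_x / D = tr(M' B) equals p - p0 by the same cyclicity. *)

lemma matrix_add_rdistrib: "((A::'a::semiring_1^'n^'m) + B) ** C = A ** C + B ** C"
  by (simp add: matrix_matrix_mult_def vec_eq_iff sum.distrib distrib_right)

lemma matrix_mult_uminus_left: "(- (A::'a::ring_1^'n^'m)) ** B = - (A ** B)"
  by (simp add: matrix_matrix_mult_def vec_eq_iff sum_negf)

lemma matrix_mult_uminus_right: "(A::'a::ring_1^'n^'m) ** (- B) = - (A ** B)"
  by (simp add: matrix_matrix_mult_def vec_eq_iff sum_negf)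

lemma matrix_diff_rdistrib: "((A::'a::ring_1^'n^'m) - B) ** C = A ** C - B ** C"
  by (simp add: matrix_matrix_mult_def vec_eq_iff sum_subtractf left_diff_distrib)

lemma matrix_diff_ldistrib: "(A::'a::ring_1^'n^'m) ** (B - C) = A ** B - A ** C"
  by (simp add: matrix_matrix_mult_def vec_eq_iff sum_subtractf right_diff_distrib)

lemma invertible_matrix_inv:
  assumes "invertible (A::'a::semiring_1^'n^'m)"
  shows matrix_inv_right: "A ** matrix_inv A = mat 1"
    and matrix_inv_left: "matrix_inv A ** A = mat 1"
proof -
  from assms obtain A' where "A ** A' = mat 1 \<and> A' ** A = mat 1"
    unfolding invertible_def by blast
  then have "A ** matrix_inv A = mat 1 \<and> matrix_inv A ** A = mat 1"
    unfolding matrix_inv_def by (rule someI)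
  then show "A ** matrix_inv A = mat 1" "matrix_inv A ** A = mat 1" by auto
qed

lemma bounded_bilinear_matrix_mult:
  "bounded_bilinear (\<lambda>(A::complex^'n^'m) (B::complex^'p^'n). A ** B)"
  unfolding bilinear_conv_bounded_bilinear[symmetric] bilinear_def
  by (auto intro!: linearI simp: matrix_add_ldistrib matrix_add_rdistrib
      scalar_matrix_assoc matrix_scalar_ac)

(* To reuse the library's exponential of a Banach algebra, complex n-by-n matrices
   are represented by the bounded real-linear operators they induce on complex^n;
   this type carries that operator algebra with the operator norm. *)
typedef (overloaded) ('n::finite) cmat_op = "UNIV :: ((complex^'n) \<Rightarrow>\<^sub>L (complex^'n)) set"
  morphisms rep_op abs_op by simp

setup_lifting type_definition_cmat_op

instantiation cmat_op :: (finite) real_normed_algebra_1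
begin
lift_definition norm_cmat_op :: "'a cmat_op \<Rightarrow> real" is norm .
lift_definition minus_cmat_op :: "'a cmat_op \<Rightarrow> 'a cmat_op \<Rightarrow> 'a cmat_op" is "(-)" .
lift_definition plus_cmat_op :: "'a cmat_op \<Rightarrow> 'a cmat_op \<Rightarrow> 'a cmat_op" is "(+)" .
lift_definition uminus_cmat_op :: "'a cmat_op \<Rightarrow> 'a cmat_op" is "uminus" .
lift_definition zero_cmat_op :: "'a cmat_op" is "0" .
lift_definition scaleR_cmat_op :: "real \<Rightarrow> 'a cmat_op \<Rightarrow> 'a cmat_op" is "scaleR" .
lift_definition times_cmat_op :: "'a cmat_op \<Rightarrow> 'a cmat_op \<Rightarrow> 'a cmat_op" is "(o\<^sub>L)" .
lift_definition one_cmat_op :: "'a cmat_op" is "id_blinfun" .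
definition dist_cmat_op :: "'a cmat_op \<Rightarrow> 'a cmat_op \<Rightarrow> real" where
  "dist_cmat_op a b = norm (a - b)"
definition [code del]: "(uniformity :: ('a cmat_op \<times> 'a cmat_op) filter) =
  (INF e\<in>{0 <..}. principal {(x, y). dist x y < e})"
definition open_cmat_op :: "'a cmat_op set \<Rightarrow> bool" where [code del]:
  "open_cmat_op S = (\<forall>x\<in>S. \<forall>\<^sub>F (x', y) in uniformity. x' = x \<longrightarrow> y \<in> S)"
definition sgn_cmat_op :: "'a cmat_op \<Rightarrow> 'a cmat_op" where
  "sgn_cmat_op x = scaleR (inverse (norm x)) x"
instance
  apply standard
  unfolding dist_cmat_op_def open_cmat_op_def sgn_cmat_op_def uniformity_cmat_op_def
  apply (simp_all add: rep_op_inject[symmetric] norm_cmat_op.rep_eq minus_cmat_op.rep_eq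
      plus_cmat_op.rep_eq uminus_cmat_op.rep_eq zero_cmat_op.rep_eq scaleR_cmat_op.rep_eq
      times_cmat_op.rep_eq one_cmat_op.rep_eq algebra_simps norm_triangle_ineq
      norm_blinfun_compose)
  apply (auto intro!: blinfun_eqI simp: blinfun.bilinear_simps)
  apply (metis blinfun_apply_id_blinfun zero_blinfun.rep_eq axis_eq_0_iff one_neq_zero)
  done
end

instance cmat_op :: (finite) banach
proof
  fix X :: "nat \<Rightarrow> 'a cmat_op"
  assume "Cauchy X"
  then have "Cauchy (\<lambda>n. rep_op (X n))"
    unfolding Cauchy_def dist_norm
    by (simp add: dist_cmat_op_def norm_cmat_op.rep_eq minus_cmat_op.rep_eq)
  then obtain L where "(\<lambda>n. rep_op (X n)) \<longlonglongrightarrow> L"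
    using convergent_eq_Cauchy convergent_def by blast
  then have "X \<longlonglongrightarrow> abs_op L"
    unfolding LIMSEQ_def dist_norm
    by (simp add: dist_cmat_op_def norm_cmat_op.rep_eq minus_cmat_op.rep_eq abs_op_inverse)
  then show "convergent X" unfolding convergent_def by blast
qed

lemma bounded_linear_matrix_vector_mult:
  "bounded_linear (\<lambda>v::complex^'n. (A::complex^'n^'m) *v v)"
proof -
  have "A *v (c *\<^sub>R v) = c *\<^sub>R (A *v v)" for c and v :: "complex^'n"
    by (simp add: vec_eq_iff matrix_vector_mult_def scaleR_sum_right)
  then have "linear (\<lambda>v::complex^'n. A *v v)"
    by (intro linearI) (simp_all add: matrix_vector_right_distrib)
  then show ?thesis using linear_conv_bounded_linear by blast
qed

definition op_of_mat :: "complex^'n^'n \<Rightarrow> 'n::finite cmat_op" where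
  "op_of_mat A = abs_op (Blinfun (\<lambda>v. A *v v))"

definition mat_of_op :: "'n::finite cmat_op \<Rightarrow> complex^'n^'n" where
  "mat_of_op f = (\<chi> i j. blinfun_apply (rep_op f) (axis j 1) $ i)"

lemma apply_op_of_mat: "blinfun_apply (rep_op (op_of_mat A)) v = A *v v"
  by (simp add: op_of_mat_def abs_op_inverse
      bounded_linear_Blinfun_apply[OF bounded_linear_matrix_vector_mult])

lemma cmat_op_eqI: "(\<And>v. blinfun_apply (rep_op f) v = blinfun_apply (rep_op g) v) \<Longrightarrow> f = g"
  by (metis blinfun_eqI rep_op_inject)

lemma mat_of_op_of_mat [simp]: "mat_of_op (op_of_mat A) = A"
  by (simp add: mat_of_op_def apply_op_of_mat vec_eq_iff matrix_vector_mult_def axis_def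
      if_distrib if_distribR sum.delta' cong: if_cong)

lemma op_of_mat_inject: "op_of_mat A = op_of_mat B \<Longrightarrow> A = B"
  by (metis mat_of_op_of_mat)

lemma op_of_mat_mult: "op_of_mat (A ** B) = op_of_mat A * op_of_mat B"
  by (rule cmat_op_eqI) (simp add: apply_op_of_mat times_cmat_op.rep_eq matrix_vector_mul_assoc)

lemma op_of_mat_one: "op_of_mat (mat 1) = 1"
  by (rule cmat_op_eqI) (simp add: apply_op_of_mat one_cmat_op.rep_eq)

lemma op_of_mat_add: "op_of_mat (A + B) = op_of_mat A + op_of_mat B"
  by (rule cmat_op_eqI)
    (simp add: apply_op_of_mat plus_cmat_op.rep_eq blinfun.add_left matrix_vector_mult_add_rdistrib)

lemma op_of_mat_scaleR: "op_of_mat (r *\<^sub>R A) = r *\<^sub>R op_of_mat A"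
  by (rule cmat_op_eqI) (simp add: apply_op_of_mat scaleR_cmat_op.rep_eq blinfun.scaleR_left
      vec_eq_iff matrix_vector_mult_def scaleR_sum_right)

lemma op_of_mat_pow: "op_of_mat (mat_pow A k) = op_of_mat A ^ k"
  by (induct k) (simp_all add: op_of_mat_one op_of_mat_mult)

lemma mat_of_op_mult_left: "mat_of_op (op_of_mat B * f) = B ** mat_of_op f"
  by (simp add: mat_of_op_def apply_op_of_mat times_cmat_op.rep_eq vec_eq_iff
      matrix_vector_mult_def matrix_matrix_mult_def)

(* Reading off the matrix is bounded (each entry is dominated by the operator norm),
   so it commutes with infinite sums and derivatives. *)
lemma bounded_linear_mat_of_op: "bounded_linear (mat_of_op :: 'n::finite cmat_op \<Rightarrow> _)"
proof
  fix f g :: "'n cmat_op" and r :: real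
  show "mat_of_op (f + g) = mat_of_op f + mat_of_op g"
    by (simp add: mat_of_op_def vec_eq_iff plus_cmat_op.rep_eq blinfun.add_left)
  show "mat_of_op (r *\<^sub>R f) = r *\<^sub>R mat_of_op f"
    by (simp add: mat_of_op_def vec_eq_iff scaleR_cmat_op.rep_eq blinfun.scaleR_left)
  have "norm (mat_of_op f) \<le> norm f * (real CARD('n) * real CARD('n))" for f :: "'n cmat_op"
  proof -
    have entry: "norm (mat_of_op f $ i $ j) \<le> norm f" for i j
    proof -
      have "norm (mat_of_op f $ i $ j) \<le> norm (blinfun_apply (rep_op f) (axis j 1))"
        by (simp add: mat_of_op_def Finite_Cartesian_Product.norm_nth_le)
      also have "\<dots> \<le> norm (rep_op f) * norm (axis j (1::complex))" by (rule norm_blinfun)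
      finally show ?thesis by (simp add: norm_cmat_op.rep_eq)
    qed
    have "norm (mat_of_op f) \<le> (\<Sum>i\<in>UNIV. norm (mat_of_op f $ i))"
      unfolding norm_vec_def by (rule L2_set_le_sum) simp
    also have "\<dots> \<le> (\<Sum>i\<in>UNIV. \<Sum>j\<in>(UNIV::'n set). norm (mat_of_op f $ i $ j))"
      by (rule sum_mono) (unfold norm_vec_def, rule L2_set_le_sum, simp)
    also have "\<dots> \<le> (\<Sum>i\<in>(UNIV::'n set). \<Sum>j\<in>(UNIV::'n set). norm f)"
      by (intro sum_mono entry)
    finally show ?thesis by (simp add: mult_ac)
  qed
  then show "\<exists>K. \<forall>f::'n cmat_op. norm (mat_of_op f) \<le> norm f * K" by blast
qed

lemma bounded_linear_op_of_mat: "bounded_linear (op_of_mat :: complex^'n^'n \<Rightarrow> 'n::finite cmat_op)"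
  using linear_conv_bounded_linear linearI op_of_mat_add op_of_mat_scaleR by blast

lemma mat_exp_sums: "(\<lambda>k. (inverse (fact k) :: real) *\<^sub>R mat_pow A k) sums mat_exp A"
proof -
  have "(\<lambda>k. mat_of_op (op_of_mat A ^ k /\<^sub>R fact k)) sums mat_of_op (exp (op_of_mat A))"
    by (rule bounded_linear.sums[OF bounded_linear_mat_of_op exp_converges])
  moreover have "mat_of_op (op_of_mat A ^ k /\<^sub>R fact k) = (inverse (fact k) :: real) *\<^sub>R mat_pow A k" for k
    by (metis op_of_mat_pow op_of_mat_scaleR mat_of_op_of_mat)
  ultimately show ?thesis unfolding mat_exp_def by (simp add: sums_iff)
qed

lemma op_of_mat_exp: "op_of_mat (mat_exp A) = exp (op_of_mat A)"
proof -
  have "(\<lambda>k. op_of_mat ((inverse (fact k) :: real) *\<^sub>R mat_pow A k)) sums op_of_mat (mat_exp A)"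
    by (rule bounded_linear.sums[OF bounded_linear_op_of_mat mat_exp_sums])
  then have "(\<lambda>k. op_of_mat A ^ k /\<^sub>R fact k) sums op_of_mat (mat_exp A)"
    by (simp add: op_of_mat_scaleR op_of_mat_pow)
  then show ?thesis using exp_converges sums_unique2 by blast
qed

lemma exp_commute:
  fixes a c :: "'a::{real_normed_algebra_1,banach}"
  assumes "a * c = c * a"
  shows "exp a * c = c * exp a"
  using assms by (simp add: exp_def suminf_mult[symmetric] summable_exp_generic
      power_commuting_commutes suminf_mult2)

lemma mat_exp_commute:
  assumes "A ** C = C ** A"
  shows "mat_exp A ** C = C ** mat_exp A"
proof (rule op_of_mat_inject)
  have "op_of_mat A * op_of_mat C = op_of_mat C * op_of_mat A"
    using assms by (simp flip: op_of_mat_mult)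
  then show "op_of_mat (mat_exp A ** C) = op_of_mat (C ** mat_exp A)"
    by (simp add: op_of_mat_mult op_of_mat_exp exp_commute)
qed

lemma mat_exp_affine_has_vector_derivative:
  assumes commute: "A ** B = B ** A"
  shows "((\<lambda>t. mat_exp (t *\<^sub>R A + B)) has_vector_derivative A ** mat_exp (t *\<^sub>R A + B)) (at t)"
proof -
  define a b where "a = op_of_mat A" and "b = op_of_mat B"
  have factor: "mat_exp (s *\<^sub>R A + B) = mat_of_op (exp (s *\<^sub>R a) * exp b)" for s
  proof -
    have "(s *\<^sub>R a) * b = b * (s *\<^sub>R a)"
      using commute by (simp add: a_def b_def flip: op_of_mat_mult)
    then have "exp (op_of_mat (s *\<^sub>R A + B)) = exp (s *\<^sub>R a) * exp b"
      by (simp add: a_def b_def op_of_mat_add op_of_mat_scaleR exp_add_commuting)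
    then show ?thesis by (metis mat_of_op_of_mat op_of_mat_exp)
  qed
  have "((\<lambda>s. exp (s *\<^sub>R a) * exp b) has_vector_derivative a * exp (t *\<^sub>R a) * exp b) (at t)"
    by (intro has_vector_derivative_mult_left exp_scaleR_has_vector_derivative_left)
  from bounded_linear.has_vector_derivative[OF bounded_linear_mat_of_op this]
  show ?thesis
    by (simp add: factor mult.assoc a_def mat_of_op_mult_left)
qed

lemma det_replace_row:
  fixes A :: "'a::comm_ring_1^'n^'n"
  shows "det (\<chi> i. if i = k then r else row i A) =
    (\<Sum>p | p permutes (UNIV::'n set). of_int (sign p) * (r $ p k * (\<Prod>j\<in>UNIV - {k}. A $ j $ p j)))"
proof -
  have "(\<Prod>i\<in>UNIV. (\<chi> i. if i = k then r else row i A) $ i $ p i)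
      = r $ p k * (\<Prod>j\<in>UNIV - {k}. A $ j $ p j)" for p
    by (subst prod.remove[of UNIV k]) (auto simp: row_def intro!: prod.cong)
  then show ?thesis unfolding det_def by simp
qed

lemma det_has_vector_derivative_rows:
  fixes M :: "real \<Rightarrow> complex^'n^'n"
  assumes MD: "(M has_vector_derivative M') (at x)"
  shows "((\<lambda>t. det (M t)) has_vector_derivative
     (\<Sum>k\<in>UNIV. det (\<chi> i. if i = k then row k M' else row i (M x)))) (at x)"
proof -
  have entry: "((\<lambda>t. M t $ i $ j) has_derivative (\<lambda>h. h *\<^sub>R (M' $ i $ j))) (at x)" for i j
  proof -
    have "bounded_linear (\<lambda>X::complex^'n^'n. X $ i $ j)"
      using bounded_linear_compose[OF bounded_linear_vec_nth bounded_linear_vec_nth] .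
    from bounded_linear.has_vector_derivative[OF this MD]
    show ?thesis unfolding has_vector_derivative_def by simp
  qed
  let ?P = "{p. p permutes (UNIV::'n set)}"
  let ?D = "\<lambda>h. \<Sum>p\<in>?P. of_int (sign p) *
      (\<Sum>k\<in>UNIV. (h *\<^sub>R (M' $ k $ p k)) * (\<Prod>j\<in>UNIV - {k}. M x $ j $ p j))"
  have "((\<lambda>t. det (M t)) has_derivative ?D) (at x)"
    unfolding det_def by (intro has_derivative_sum has_derivative_mult_right has_derivative_prod entry)
  moreover have "?D h = h *\<^sub>R (\<Sum>k\<in>UNIV. det (\<chi> i. if i = k then row k M' else row i (M x)))" for h
    unfolding det_replace_row scaleR_sum_right sum_distrib_left
    by (subst sum.swap) (simp add: scaleR_conv_of_real mult_ac row_def)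
  ultimately show ?thesis unfolding has_vector_derivative_def by simp
qed

lemma sum_det_replace_row_mult:
  fixes A N :: "'a::comm_ring_1^'n^'n"
  shows "(\<Sum>k\<in>UNIV. det (\<chi> i. if i = k then row k (N ** A) else row i A)) = trace N * det A"
proof -
  have replace_by_row: "det (\<chi> i. if i = k then row j A else row i A) = (if j = k then det A else 0)"
    for j k
  proof (cases "j = k")
    case True
    then have "(\<chi> i. if i = k then row j A else row i A) = A" by (simp add: vec_eq_iff row_def)
    then show ?thesis using True by simp
  next
    case False
    then show ?thesis
      by (simp, intro det_identical_rows[of k j]) (auto simp: row_def vec_eq_iff)
  qed
  have "row k (N ** A) = (\<Sum>j\<in>UNIV. N $ k $ j *s row j A)" for k
    by (simp add: vec_eq_iff row_def matrix_matrix_mult_def sum_component)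
  then have "det (\<chi> i. if i = k then row k (N ** A) else row i A) = N $ k $ k * det A" for k
    using det_linear_row_sum[of UNIV k "\<lambda>i j. N $ k $ j *s row j A" "\<lambda>i. row i A"]
    by (simp add: det_row_mul replace_by_row if_distrib cong: if_cong)
  then show ?thesis by (simp add: trace_def sum_distrib_right)
qed

lemma jacobi_formula:
  fixes M :: "real \<Rightarrow> complex^'n^'n"
  assumes MD: "(M has_vector_derivative M') (at x)" and inv: "invertible (M x)"
  shows "((\<lambda>t. det (M t)) has_vector_derivative trace (M' ** matrix_inv (M x)) * det (M x)) (at x)"
proof -
  have factor: "(M' ** matrix_inv (M x)) ** M x = M'"
    by (simp flip: matrix_mul_assoc add: matrix_inv_left[OF inv])
  have "(\<Sum>k\<in>UNIV. det (\<chi> i. if i = k then row k M' else row i (M x)))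
      = trace (M' ** matrix_inv (M x)) * det (M x)"
    using sum_det_replace_row_mult[of "M' ** matrix_inv (M x)" "M x"] unfolding factor .
  with det_has_vector_derivative_rows[OF MD] show ?thesis by simp
qed

lemma log_derivative_det_one_plus_square:
  fixes F :: "real \<Rightarrow> complex^'n^'n"
  assumes FD: "(F has_vector_derivative F') (at x)"
    and inv: "invertible (mat 1 + F x ** F x)"
  shows "vector_derivative (\<lambda>t. det (mat 1 + F t ** F t)) (at x) / det (mat 1 + F x ** F x)
    = trace ((F x ** F' + F' ** F x) ** matrix_inv (mat 1 + F x ** F x))"
proof -
  have "((\<lambda>t. mat 1 + F t ** F t) has_vector_derivative F x ** F' + F' ** F x) (at x)"
    using has_vector_derivative_add[OF has_vector_derivative_const
        bounded_bilinear.has_vector_derivative[OF bounded_bilinear_matrix_mult FD FD]]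
    by simp
  from vector_derivative_at[OF jacobi_formula[OF this inv]]
  show ?thesis using inv by (simp add: invertible_det_nz)
qed

lemma soliton_factor:
  fixes S :: "complex^'n^'n" and y :: real
  assumes inv: "invertible S"
  defines "E \<equiv> \<lambda>t. mat_exp (- (t *\<^sub>R S) - y *\<^sub>R matrix_inv S)"
  shows "E t ** S = S ** E t" and "(E has_vector_derivative - S ** E t) (at t)"
proof -
  have E_affine: "E = (\<lambda>t. mat_exp (t *\<^sub>R (- S) + - (y *\<^sub>R matrix_inv S)))"
    by (simp add: E_def)
  have "(- S) ** (- (y *\<^sub>R matrix_inv S)) = (- (y *\<^sub>R matrix_inv S)) ** (- S)"
    by (simp add: matrix_mult_uminus_left matrix_mult_uminus_right matrix_scalar_ac
        flip: scalar_matrix_assoc add: matrix_inv_left[OF inv] matrix_inv_right[OF inv])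
  then show "(E has_vector_derivative - S ** E t) (at t)"
    unfolding E_affine by (rule mat_exp_affine_has_vector_derivative)
  have "(t *\<^sub>R (- S) + - (y *\<^sub>R matrix_inv S)) ** S = S ** (t *\<^sub>R (- S) + - (y *\<^sub>R matrix_inv S))"
    by (simp add: matrix_diff_rdistrib matrix_diff_ldistrib matrix_mult_uminus_left matrix_mult_uminus_right
        matrix_scalar_ac flip: scalar_matrix_assoc add: matrix_inv_left[OF inv] matrix_inv_right[OF inv])
  then show "E t ** S = S ** E t"
    unfolding E_affine by (rule mat_exp_commute)
qed

lemma commute_matrix_inv:
  fixes A M :: "'a::semiring_1^'n^'n"
  assumes commute: "A ** M = M ** A" and inv: "invertible M"
  shows "A ** matrix_inv M = matrix_inv M ** A"
proof -
  have "matrix_inv M ** A = matrix_inv M ** A ** (M ** matrix_inv M)"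
    by (simp add: matrix_inv_right[OF inv])
  also have "\<dots> = matrix_inv M ** (A ** M) ** matrix_inv M"
    by (simp add: matrix_mul_assoc)
  also have "\<dots> = (matrix_inv M ** M) ** A ** matrix_inv M"
    by (simp add: commute matrix_mul_assoc)
  finally show ?thesis by (simp add: matrix_inv_left[OF inv])
qed

lemma trace_rotate_commuting:
  fixes B C S :: "'a::comm_semiring_1^'n^'n"
  assumes "C ** B = B ** C"
  shows "trace (C ** S ** B) = trace (S ** C ** B)"
proof -
  have "trace (C ** S ** B) = trace (B ** (C ** S))" by (rule trace_mul_sym)
  also have "\<dots> = trace ((C ** B) ** S)" by (simp only: assms matrix_mul_assoc)
  also have "\<dots> = trace (S ** (C ** B))" by (rule trace_mul_sym)
  also have "\<dots> = trace (S ** C ** B)" by (simp add: matrix_mul_assoc)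
  finally show ?thesis .
qed

lemma row_times_column_eq_trace:
  "((P::'a::comm_semiring_1^'m^1) ** (Q::'a^1^'m)) $ 1 $ 1 = trace (Q ** P)"
  by (simp add: trace_def matrix_matrix_mult_def mult.commute)

lemma trace_uminus: "trace (- (A::'a::comm_ring_1^'n^'n)) = - trace A"
  by (simp add: trace_def sum_negf)

(* With A = K X and B = (1 + A^2)^-1, the
   relation S K + K S = V U and [X, S] = 0 turn the scalars defining q and p into
   traces; cyclicity and [A, B] = 0 identify them with 2 tr(S A B) and with
   -tr(M' B), where M' = A A' + A' A and A' = -A S is the x-derivative of K Xi. *)
lemma soliton_trace_identities:
  fixes S K X :: "'a::comm_ring_1^'m^'m" and U :: "'a^'m^1" and V :: "'a^1^'m"
  assumes XS: "X ** S = S ** X" and VU: "S ** K + K ** S = V ** U"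
    and inv: "invertible (mat 1 + (K ** X) ** (K ** X))"
  defines "A \<equiv> K ** X" and "B \<equiv> matrix_inv (mat 1 + (K ** X) ** (K ** X))"
  shows "(U ** X ** B ** V) $ 1 $ 1 = 2 * trace (S ** A ** B)"
    and "(U ** X ** K ** X ** B ** V) $ 1 $ 1 = - trace ((A ** - (A ** S) + - (A ** S) ** A) ** B)"
proof -
  have AB: "A ** B = B ** A"
    unfolding A_def B_def
    by (rule commute_matrix_inv[OF _ inv]) (simp add: matrix_add_ldistrib matrix_add_rdistrib matrix_mul_assoc)
  have AAB: "(A ** A) ** B = B ** (A ** A)"
    by (metis AB matrix_mul_assoc)
  have KSX: "K ** S ** X = A ** S"
    unfolding A_def by (simp add: XS flip: matrix_mul_assoc)
  have "(V ** U) ** X ** B = S ** A ** B + A ** S ** B"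
    unfolding VU[symmetric] by (simp add: matrix_add_rdistrib matrix_mul_assoc KSX) (simp add: A_def matrix_mul_assoc)
  then have "(U ** X ** B ** V) $ 1 $ 1 = trace (S ** A ** B) + trace (A ** S ** B)"
    by (simp only: row_times_column_eq_trace matrix_mul_assoc trace_add)
  then show "(U ** X ** B ** V) $ 1 $ 1 = 2 * trace (S ** A ** B)"
    by (simp only: trace_rotate_commuting[OF AB] mult_2)
  have "(V ** U) ** X ** K ** X ** B = S ** A ** A ** B + A ** S ** A ** B"
    unfolding VU[symmetric] by (simp add: matrix_add_rdistrib matrix_mul_assoc KSX) (simp add: A_def matrix_mul_assoc)
  then have "(U ** X ** K ** X ** B ** V) $ 1 $ 1 = trace (S ** A ** A ** B) + trace (A ** S ** A ** B)"
    by (simp only: row_times_column_eq_trace matrix_mul_assoc trace_add)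
  moreover have "trace (A ** A ** S ** B) = trace (S ** A ** A ** B)"
    using trace_rotate_commuting[OF AAB, of S] by (simp add: matrix_mul_assoc)
  moreover have "(A ** - (A ** S) + - (A ** S) ** A) ** B = - (A ** A ** S ** B + A ** S ** A ** B)"
    by (simp add: matrix_diff_rdistrib matrix_mult_uminus_left matrix_mult_uminus_right matrix_mul_assoc)
  ultimately show "(U ** X ** K ** X ** B ** V) $ 1 $ 1 = - trace ((A ** - (A ** S) + - (A ** S) ** A) ** B)"
    by (simp only: trace_uminus trace_add minus_minus add.commute)
qed

theorem mainTheorem6:
  fixes S K :: "complex^'m^'m"
    and U :: "complex^'m^1"
    and V :: "complex^1^'m"
    and p0 :: complex
    and Xi :: "real \<Rightarrow> real \<Rightarrow> complex^'m^'m"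
    and q p D :: "real \<Rightarrow> real \<Rightarrow> complex"
    and x y :: real
  assumes S_inv: "invertible S"
    and K_sol: "S ** K + K ** S = V ** U"
    and Xi_def: "\<And>x y. Xi x y = mat_exp (- (x *\<^sub>R S) - y *\<^sub>R matrix_inv S)"
    and q_def: "\<And>x y. q x y =
        (U ** Xi x y ** matrix_inv (mat 1 + (K ** Xi x y) ** (K ** Xi x y)) ** V) $ 1 $ 1"
    and p_def: "\<And>x y. p x y = p0 -
        (U ** Xi x y ** K ** Xi x y ** matrix_inv (mat 1 + (K ** Xi x y) ** (K ** Xi x y)) ** V) $ 1 $ 1"
    and D_def: "\<And>x y. D x y = det (mat 1 + (K ** Xi x y) ** (K ** Xi x y))"
    and D_nz: "D x y \<noteq> 0"
  shows "p x y = p0 + vector_derivative (\<lambda>t. D t y) (at x) / D x y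
     \<and> q x y = 2 * trace (S ** K ** Xi x y ** matrix_inv (mat 1 + (K ** Xi x y) ** (K ** Xi x y)))"
proof -
  define X A where "X = Xi x y" and "A = K ** X"
  have Xi_y: "(\<lambda>t. Xi t y) = (\<lambda>t. mat_exp (- (t *\<^sub>R S) - y *\<^sub>R matrix_inv S))"
    by (simp add: Xi_def)
  have XS: "X ** S = S ** X"
    unfolding X_def Xi_def by (rule soliton_factor(1)[OF S_inv])
  have "((\<lambda>t. K ** Xi t y) has_vector_derivative K ** (- S ** X)) (at x)"
    unfolding Xi_y X_def Xi_def
    by (rule bounded_linear.has_vector_derivative[OF bounded_bilinear.bounded_linear_right
          [OF bounded_bilinear_matrix_mult] soliton_factor(2)[OF S_inv]])
  moreover have "K ** (- S ** X) = - (A ** S)"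
    unfolding A_def
    by (simp add: XS matrix_mult_uminus_left matrix_mult_uminus_right flip: matrix_mul_assoc)
  ultimately have dA: "((\<lambda>t. K ** Xi t y) has_vector_derivative - (A ** S)) (at x)"
    by simp
  have inv: "invertible (mat 1 + A ** A)"
    using D_nz by (simp add: D_def A_def X_def invertible_det_nz)
  note log_derivative = log_derivative_det_one_plus_square[OF dA, folded X_def A_def, OF inv]
  note traces = soliton_trace_identities[OF XS K_sol, folded A_def, OF inv]
  show ?thesis
    using log_derivative traces by (simp add: p_def q_def D_def A_def X_def matrix_mul_assoc)
qed

end
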